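(* Let $\gamma$ be the boundary of a magnetic billiard with field magnitude $\beta>0$ having the $\delta$-Gutkin property, where $\gamma$ is parametrized by the angle $\varphi$ of its tangent vector with a fixed direction, so that, identifying $\mathbb{R}^2$ with $\mathbb{C}$, $\frac{d\gamma}{d\varphi}=\rho(\varphi)e^{i\varphi}$ with $\rho$ the radius of curvature. Suppose $d$ is a function such that for every $\bar\varphi$ the Larmor arc (circle of radius $1/\beta$ traversed counterclockwise) inside $\Omega$ that starts at $\gamma(\bar\varphi+d(\bar\varphi))$ making angle $\delta$ with $\gamma$ (velocity $e^{i(\bar\varphi+d(\bar\varphi)+\delta)}$) ends at $\gamma(\bar\varphi-d(\bar\varphi))$ making angle $\delta$ with $\gamma$ (velocity $e^{i(\bar\varphi-d(\bar\varphi)-\delta)}$), its velocity angle increasing from $\bar\varphi+d+\delta$ to $\bar\varphi-d+2\pi-\delta$. Then for every $\bar\varphi$ $$\int_{\bar\varphi-d(\bar\varphi)}^{\bar\varphi+d(\bar\varphi)}\rho(\xi)e^{i\xi}\,d\xi=\frac{2}{\beta}\sin\big(\delta+d(\bar\varphi)\big)e^{i\bar\varphi}.$$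
   Context: Magnetic billiard in a domain $\Omega$ with boundary $\gamma$: a particle moves with unit speed along arcs of counterclockwise circles of radius $1/\beta$ (Larmor arcs) and reflects at $\gamma$ by the law of geometric optics. The $\delta$-Gutkin property means every Larmor arc entering $\Omega$ making angle $\delta$ with $\gamma$ exits $\Omega$ making angle $\delta$ with $\gamma$. Writing $\varphi_1=\bar\varphi-d(\bar\varphi)$, $\varphi_2=\bar\varphi+d(\bar\varphi)$, one has $\bar\varphi=(\varphi_1+\varphi_2)/2$, $d=(\varphi_2-\varphi_1)/2$. *)

theory Defs
  imports "HOL-Analysis.Analysis"
begin

text \<open>Larmor arc of a magnetic field of magnitude beta: unit-speed motion along a
  counterclockwise circle of radius 1/beta, starting at z0 with velocity exp(i theta0).
  Its centre is z0 + i exp(i theta0)/beta; at time t the velocity is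
  exp(i (theta0 + beta t)).\<close>
definition larmor_arc :: "real \<Rightarrow> complex \<Rightarrow> real \<Rightarrow> real \<Rightarrow> complex" where
  "larmor_arc \<beta> z0 \<theta>0 t =
     (z0 + \<i> * exp (\<i> * of_real \<theta>0) / of_real \<beta>)
     - \<i> * exp (\<i> * of_real (\<theta>0 + \<beta> * t)) / of_real \<beta>"

definition ointegral :: "real \<Rightarrow> real \<Rightarrow> (real \<Rightarrow> complex) \<Rightarrow> complex" where
  "ointegral a b f = (if a \<le> b then integral {a..b} f else - integral {b..a} f)"

end

theory Submission
  imports Defs
begin

text \<open>By the fundamental theorem of calculus the integral is the chord
  \<open>\<gamma>(\<phi>b + d) - \<gamma>(\<phi>b - d)\<close>. This chord is also the chord of the Larmor arc joining the two
  points, and a circle of radius \<open>1/\<beta>\<close> traversed with unit speed has chord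
  \<open>(\<i>/\<beta>) (e^(\<i> \<theta>1) - e^(\<i> \<theta>0))\<close> between velocity angles \<open>\<theta>0\<close> and \<open>\<theta>1\<close>. Here the velocity
  angles are \<open>\<phi>b + (\<delta> + d)\<close> and, modulo \<open>2\<pi>\<close>, \<open>\<phi>b - (\<delta> + d)\<close>, which gives
  \<open>(2/\<beta>) sin(\<delta> + d) e^(\<i> \<phi>b)\<close>.\<close>

lemma ointegral_fundamental_theorem:
  fixes g f :: "real \<Rightarrow> complex"
  assumes "\<And>x. x \<in> {min a b..max a b} \<Longrightarrow>
             (g has_vector_derivative f x) (at x within {min a b..max a b})"
  shows "ointegral a b f = g b - g a"
proof (cases "a \<le> b")
  case True
  then have "(f has_integral g b - g a) {a..b}"
    using assms by (intro fundamental_theorem_of_calculus) auto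
  with True show ?thesis
    unfolding ointegral_def by (simp add: integral_unique)
next
  case False
  then have "(f has_integral g a - g b) {b..a}"
    using assms by (intro fundamental_theorem_of_calculus) auto
  with False show ?thesis
    unfolding ointegral_def by (simp add: integral_unique)
qed

lemma larmor_arc_chord:
  "z0 - larmor_arc \<beta> z0 \<theta>0 t =
     \<i> / of_real \<beta> * (exp (\<i> * of_real (\<theta>0 + \<beta> * t)) - exp (\<i> * of_real \<theta>0))"
  unfolding larmor_arc_def by (simp add: diff_divide_distrib right_diff_distrib)

lemma exp_ii_periodic: "exp (\<i> * of_real (\<theta> + 2 * pi)) = exp (\<i> * of_real \<theta>)"
  by (simp add: distrib_left exp_add mult.commute)

lemma exp_ii_symmetric_diff:
  "exp (\<i> * of_real (c - x)) - exp (\<i> * of_real (c + x))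
     = - 2 * \<i> * of_real (sin x) * exp (\<i> * of_real c)"
  by (simp add: complex_eq_iff Re_exp Im_exp cos_diff cos_add sin_diff sin_add
      flip: of_real_diff of_real_add)

theorem proposition3p3:
  fixes \<gamma> :: "real \<Rightarrow> complex" and \<rho> :: "real \<Rightarrow> real" and d :: "real \<Rightarrow> real"
    and \<beta> \<delta> :: real and \<Omega> :: "complex set"
  assumes beta_pos: "\<beta> > 0"
    and delta: "0 < \<delta>" "\<delta> < pi"
    and param: "\<And>\<phi>. (\<gamma> has_vector_derivative (of_real (\<rho> \<phi>) * exp (\<i> * of_real \<phi>))) (at \<phi>)"
    and arcs: "\<And>\<phi>b. \<exists>T>0.
        \<beta> * T = (\<phi>b - d \<phi>b + 2 * pi - \<delta>) - (\<phi>b + d \<phi>b + \<delta>) \<and>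
        larmor_arc \<beta> (\<gamma> (\<phi>b + d \<phi>b)) (\<phi>b + d \<phi>b + \<delta>) T = \<gamma> (\<phi>b - d \<phi>b) \<and>
        (\<forall>t\<in>{0<..<T}. larmor_arc \<beta> (\<gamma> (\<phi>b + d \<phi>b)) (\<phi>b + d \<phi>b + \<delta>) t \<in> \<Omega>)"
  shows "\<forall>\<phi>b. ointegral (\<phi>b - d \<phi>b) (\<phi>b + d \<phi>b)
            (\<lambda>\<xi>. of_real (\<rho> \<xi>) * exp (\<i> * of_real \<xi>))
          = of_real (2 / \<beta> * sin (\<delta> + d \<phi>b)) * exp (\<i> * of_real \<phi>b)"
proof
  fix p
  let ?x = "\<delta> + d p"
  obtain T where T: "\<beta> * T = (p - d p + 2 * pi - \<delta>) - (p + d p + \<delta>)"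
      and arc_end: "larmor_arc \<beta> (\<gamma> (p + d p)) (p + d p + \<delta>) T = \<gamma> (p - d p)"
    using arcs [of p] by blast
  have start_angle: "p + d p + \<delta> = p + ?x"
    by simp
  have end_angle: "p + ?x + \<beta> * T = (p - ?x) + 2 * pi"
    using T by simp
  have "ointegral (p - d p) (p + d p) (\<lambda>\<xi>. of_real (\<rho> \<xi>) * exp (\<i> * of_real \<xi>))
      = \<gamma> (p + d p) - larmor_arc \<beta> (\<gamma> (p + d p)) (p + d p + \<delta>) T"
    unfolding arc_end
    by (rule ointegral_fundamental_theorem, rule has_vector_derivative_at_within, rule param)
  also have "\<dots> = \<i> / of_real \<beta> *
      (exp (\<i> * of_real ((p - ?x) + 2 * pi)) - exp (\<i> * of_real (p + ?x)))"
    unfolding larmor_arc_chord end_angle start_angle ..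
  also have "\<dots> = of_real (2 / \<beta> * sin ?x) * exp (\<i> * of_real p)"
    unfolding exp_ii_periodic exp_ii_symmetric_diff using beta_pos by (simp add: field_simps)
  finally show "ointegral (p - d p) (p + d p) (\<lambda>\<xi>. of_real (\<rho> \<xi>) * exp (\<i> * of_real \<xi>))
      = of_real (2 / \<beta> * sin ?x) * exp (\<i> * of_real p)" .
qed

end
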